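(* Let $\{\mathcal G,(\Gamma_0,\Gamma_1),(\widetilde\Gamma_0,\widetilde\Gamma_1)\}$ be a triple for the adjoint pair $\{S,\widetilde S\}$ satisfying (G), (D), (M), and assume $\rho(A_0)\neq\emptyset$ (equivalently $\rho(\widetilde A_0)\neq\emptyset$). Let $\gamma,\widetilde\gamma$ be the associated $\gamma$-fields. Then for all $\lambda\in\rho(A_0)$ and $\mu\in\rho(\widetilde A_0)$: (i) $\gamma(\lambda)$ and $\widetilde\gamma(\mu)$ are bounded operators from $\mathcal G$ to $\mathfrak H$ with dense domains $\operatorname{dom}\gamma(\lambda)=\operatorname{ran}\Gamma_0$, $\operatorname{dom}\widetilde\gamma(\mu)=\operatorname{ran}\widetilde\Gamma_0$, and $\operatorname{ran}\gamma(\lambda)=\ker(T-\lambda)$, $\operatorname{ran}\widetilde\gamma(\mu)=\ker(\widetilde T-\mu)$; (ii) for $\varphi\in\operatorname{ran}\Gamma_0$ and $\psi\in\operatorname{ran}\widetilde\Gamma_0$ the functions $\lambda\mapsto\gamma(\lambda)\varphi$ and $\mu\mapsto\widetilde\gamma(\mu)\psi$ are holomorphic on $\rho(A_0)$ and $\rho(\widetilde A_0)$, respectively, and $\gamma(\lambda)=(I+(\lambda-\nu)(A_0-\lambda)^{-1})\gamma(\nu)$ for $\lambda,\nu\in\rho(A_0)$, $\widetilde\gamma(\mu)=(I+(\mu-\omega)(\widetilde A_0-\mu)^{-1})\widetilde\gamma(\omega)$ for $\mu,\omega\in\rho(\widetilde A_0)$; (iii) $\gamma(\lambda)^*$ and $\widetilde\gamma(\mu)^*$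 are everywhere defined bounded operators from $\mathfrak H$ to $\mathcal G$ with $\gamma(\lambda)^*f=\widetilde\Gamma_1(\widetilde A_0-\overline\lambda)^{-1}f$ and $\widetilde\gamma(\mu)^*g=\Gamma_1(A_0-\overline\mu)^{-1}g$ for all $f,g\in\mathfrak H$; in particular $\operatorname{ran}\gamma(\lambda)^*\subset\operatorname{ran}\widetilde\Gamma_1$ and $\operatorname{ran}\widetilde\gamma(\mu)^*\subset\operatorname{ran}\Gamma_1$.
   Context: Let $\mathfrak H$ be a separable Hilbert space. An adjoint pair $\{S,\widetilde S\}$ consists of densely defined closed operators $S,\widetilde S$ in $\mathfrak H$ with $(Sf,g)=(f,\widetilde Sg)$ for all $f\in\operatorname{dom}S$, $g\in\operatorname{dom}\widetilde S$. Fix operators $T\subset S^*$ and $\widetilde T\subset\widetilde S^*$ which are cores, i.e. $\overline T=S^*$ and $\overline{\widetilde T}=\widetilde S^*$. A triple $\{\mathcal G,(\Gamma_0,\Gamma_1),(\widetilde\Gamma_0,\widetilde\Gamma_1)\}$ for $\{S,\widetilde S\}$ consists of a Hilbert space $\mathcal G$ and linear maps $\Gamma_0,\Gamma_1:\operatorname{dom}T\to\mathcal G$, $\widetilde\Gamma_0,\widetilde\Gamma_1:\operatorname{dom}\widetilde T\to\mathcal G$. Put $A_0:=T\upharpoonright\ker\Gamma_0$ and $\widetilde A_0:=\widetilde T\upharpoonright\ker\widetilde\Gamma_0$. Conditions: (G) $(Tf,g)_{\mathfrak H}-(f,\widetilde Tg)_{\mathfrak H}=(\Gamma_1f,\widetilde\Gamma_0g)_{\mathcal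 G}-(\Gamma_0f,\widetilde\Gamma_1g)_{\mathcal G}$ for all $f\in\operatorname{dom}T$, $g\in\operatorname{dom}\widetilde T$; (D) $\operatorname{ran}\Gamma_0$ and $\operatorname{ran}\widetilde\Gamma_0$ are dense in $\mathcal G$; (M) $A_0^*=\widetilde A_0$ and $\widetilde A_0^*=A_0$. For $\lambda\in\rho(A_0)$ one has $\operatorname{dom}T=\ker\Gamma_0\dotplus\ker(T-\lambda)$, so $\Gamma_0\upharpoonright\ker(T-\lambda)$ is injective with range $\operatorname{ran}\Gamma_0$; similarly for $\widetilde T$. The $\gamma$-fields are $\gamma(\lambda):=(\Gamma_0\upharpoonright\ker(T-\lambda))^{-1}$, $\lambda\in\rho(A_0)$, and $\widetilde\gamma(\mu):=(\widetilde\Gamma_0\upharpoonright\ker(\widetilde T-\mu))^{-1}$, $\mu\in\rho(\widetilde A_0)$. *)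

theory Defs
  imports "HOL-Analysis.Analysis"
begin

text \<open>HOL-Analysis only provides real inner product spaces, so complex
inner product spaces (inner product linear in the first argument, conjugate
linear in the second) are introduced as a type class.  A complex Hilbert space
is a type of sort cinner_space and complete_space.\<close>

class cinner_space = real_normed_vector +
  fixes scaleC :: "complex \<Rightarrow> 'a \<Rightarrow> 'a"
  fixes cinner :: "'a \<Rightarrow> 'a \<Rightarrow> complex"
  assumes scaleC_add_right: "scaleC a (x + y) = scaleC a x + scaleC a y"
  and scaleC_add_left: "scaleC (a + b) x = scaleC a x + scaleC b x"
  and scaleC_scaleC: "scaleC a (scaleC b x) = scaleC (a * b) x"
  and scaleC_one: "scaleC 1 x = x"
  and scaleR_scaleC: "scaleR r x = scaleC (complex_of_real r) x"
  and cinner_commute: "cinner x y = cnj (cinner y x)"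
  and cinner_add_left: "cinner (x + y) z = cinner x z + cinner y z"
  and cinner_scaleC_left: "cinner (scaleC a x) y = a * cinner x y"
  and cinner_self_real: "Im (cinner x x) = 0"
  and cinner_self_nonneg: "0 \<le> Re (cinner x x)"
  and cinner_self_eq_zero: "cinner x x = 0 \<longleftrightarrow> x = 0"
  and norm_eq_sqrt_cinner: "norm x = sqrt (Re (cinner x x))"

instantiation complex :: cinner_space
begin
definition scaleC_complex :: "complex \<Rightarrow> complex \<Rightarrow> complex" where
  "scaleC_complex a x = a * x"
definition cinner_complex :: "complex \<Rightarrow> complex \<Rightarrow> complex" where
  "cinner_complex x y = x * cnj y"
instance
proof
  fix a b x y z :: complex and r :: real
  show "scaleC a (x + y) = scaleC a x + scaleC a y"
    by (simp add: scaleC_complex_def algebra_simps)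
  show "scaleC (a + b) x = scaleC a x + scaleC b x"
    by (simp add: scaleC_complex_def algebra_simps)
  show "scaleC a (scaleC b x) = scaleC (a * b) x"
    by (simp add: scaleC_complex_def algebra_simps)
  show "scaleC 1 x = x" by (simp add: scaleC_complex_def)
  show "scaleR r x = scaleC (complex_of_real r) x"
    by (simp add: scaleC_complex_def scaleR_conv_of_real)
  show "cinner x y = cnj (cinner y x)" by (simp add: cinner_complex_def)
  show "cinner (x + y) z = cinner x z + cinner y z"
    by (simp add: cinner_complex_def algebra_simps)
  show "cinner (scaleC a x) y = a * cinner x y"
    by (simp add: cinner_complex_def scaleC_complex_def)
  show "Im (cinner x x) = 0" by (simp add: cinner_complex_def)
  show "0 \<le> Re (cinner x x)" by (simp add: cinner_complex_def)
  show "(cinner x x = 0) = (x = 0)" by (simp add: cinner_complex_def)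
  show "norm x = sqrt (Re (cinner x x))"
    by (simp add: cinner_complex_def complex_mult_cnj cmod_def power2_eq_square)
qed
end

text \<open>A (possibly unbounded) linear operator from 'a to 'b is represented by its
graph, a set of pairs.  Domain A and Range A are the domain and range.\<close>

definition is_op :: "('a::cinner_space \<times> 'b::cinner_space) set \<Rightarrow> bool" where
  "is_op A \<longleftrightarrow> (0, 0) \<in> A
     \<and> (\<forall>x y u v. (x, y) \<in> A \<longrightarrow> (u, v) \<in> A \<longrightarrow> (x + u, y + v) \<in> A)
     \<and> (\<forall>c x y. (x, y) \<in> A \<longrightarrow> (scaleC c x, scaleC c y) \<in> A)
     \<and> (\<forall>y. (0, y) \<in> A \<longrightarrow> y = 0)"

definition op_app :: "('a \<times> 'b) set \<Rightarrow> 'a \<Rightarrow> 'b" where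
  "op_app A x = (THE y. (x, y) \<in> A)"

definition bounded_op :: "('a::cinner_space \<times> 'b::cinner_space) set \<Rightarrow> bool" where
  "bounded_op A \<longleftrightarrow> (\<exists>C. \<forall>x y. (x, y) \<in> A \<longrightarrow> norm y \<le> C * norm x)"

definition densely_defined :: "('a::cinner_space \<times> 'b) set \<Rightarrow> bool" where
  "densely_defined A \<longleftrightarrow> closure (Domain A) = UNIV"

definition closed_op :: "('a::cinner_space \<times> 'b::cinner_space) set \<Rightarrow> bool" where
  "closed_op A \<longleftrightarrow> closed A"

definition adj :: "('a::cinner_space \<times> 'b::cinner_space) set \<Rightarrow> ('b \<times> 'a) set" where
  "adj A = {(y, w). \<forall>x z. (x, z) \<in> A \<longrightarrow> cinner z y = cinner x w}"

definition shift_op :: "('a::cinner_space \<times> 'a) set \<Rightarrow> complex \<Rightarrow> ('a \<times> 'a) set" where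
  "shift_op A l = {(x, y - scaleC l x) | x y. (x, y) \<in> A}"

definition op_ker :: "('a \<times> 'b::zero) set \<Rightarrow> 'a set" where
  "op_ker A = {x. (x, 0) \<in> A}"

definition resolvent_set :: "('a::cinner_space \<times> 'a) set \<Rightarrow> complex set" where
  "resolvent_set A = {l. (\<forall>x. (x, 0) \<in> shift_op A l \<longrightarrow> x = 0)
                         \<and> Range (shift_op A l) = UNIV
                         \<and> (\<exists>C. \<forall>x y. (x, y) \<in> shift_op A l \<longrightarrow> norm x \<le> C * norm y)}"

definition resolvent :: "('a::cinner_space \<times> 'a) set \<Rightarrow> complex \<Rightarrow> 'a \<Rightarrow> 'a" where
  "resolvent A l y = (THE x. (x, y) \<in> shift_op A l)"

definition clinear_on :: "'a::cinner_space set \<Rightarrow> ('a \<Rightarrow> 'b::cinner_space) \<Rightarrow> bool" where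
  "clinear_on D f \<longleftrightarrow> (\<forall>x\<in>D. \<forall>y\<in>D. f (x + y) = f x + f y)
                     \<and> (\<forall>c. \<forall>x\<in>D. f (scaleC c x) = scaleC c (f x))"

text \<open>gamma-field: gamma(\<lambda>) = (Gamma0 restricted to ker(T - \<lambda>))^{-1}, as a graph.\<close>
definition gamma_field ::
  "('a::cinner_space \<times> 'a) set \<Rightarrow> ('a \<Rightarrow> 'g::cinner_space) \<Rightarrow> complex \<Rightarrow> ('g \<times> 'a) set" where
  "gamma_field T G0 l = {(G0 f, f) | f. f \<in> op_ker (shift_op T l)}"

definition vholomorphic_on :: "(complex \<Rightarrow> 'a::cinner_space) \<Rightarrow> complex set \<Rightarrow> bool" where
  "vholomorphic_on f S \<longleftrightarrow>
     (\<forall>z\<in>S. \<exists>v. ((\<lambda>w. scaleC (inverse (w - z)) (f w - f z)) \<longlongrightarrow> v) (at z))"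

end

(*
  For l in the resolvent set of A0, dom T is the direct sum of ker Gamma0 = dom A0 and ker (T - l);
  the ker (T - l)-component of f is f - (A0 - l)^-1 (T - l) f.  Hence gamma(l) is defined on all of
  ran Gamma0 with range ker (T - l), and the resolvent identity relates gamma(l) and gamma(n) and
  makes l |-> gamma(l) phi holomorphic.  Since the adjoint of A0 is A0~, cnj l lies in the resolvent
  set of A0~, and Green's identity applied to ker (T - l) and ker Gamma0~ gives
  (gamma(l) phi, g) = (phi, Gamma1~ (A0~ - cnj l)^-1 g).  This identifies gamma(l)* and shows that
  gamma(l) maps the unit ball to a weakly bounded set, so gamma(l) is bounded by the uniform
  boundedness principle.  The statements for gamma~ follow by exchanging the roles of the two sides.
*)

theory Submission
  imports Defs
begin

section \<open>Complex inner product spaces\<close>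

declare scaleC_one [simp]

lemma cinner_zero_left [simp]: "cinner 0 x = 0"
  by (metis add_cancel_right_right add_0 cinner_add_left)

lemma cinner_zero_right [simp]: "cinner x 0 = 0"
  by (metis cinner_commute cinner_zero_left complex_cnj_zero)

lemma cinner_add_right: "cinner x (y + z) = cinner x y + cinner x z"
  by (metis cinner_commute cinner_add_left complex_cnj_add)

lemma cinner_scaleC_right: "cinner x (scaleC a y) = cnj a * cinner x y"
  by (metis cinner_commute cinner_scaleC_left complex_cnj_mult)

lemma cinner_minus_left: "cinner (- x) y = - cinner x y"
  by (metis add.right_inverse cinner_add_left cinner_zero_left minus_unique)

lemma cinner_minus_right: "cinner x (- y) = - cinner x y"
  by (metis cinner_commute cinner_minus_left complex_cnj_minus)

lemma cinner_diff_left: "cinner (x - y) z = cinner x z - cinner y z"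
  by (metis cinner_add_left cinner_minus_left diff_conv_add_uminus)

lemma cinner_diff_right: "cinner x (y - z) = cinner x y - cinner x z"
  by (metis cinner_add_right cinner_minus_right diff_conv_add_uminus)

lemma scaleC_zero_right [simp]: "scaleC a 0 = 0"
  by (metis add_cancel_right_right add_0 scaleC_add_right)

lemma scaleC_zero_left [simp]: "scaleC 0 x = 0"
  by (metis add_cancel_right_right add_0 scaleC_add_left)

lemma scaleC_minus_right: "scaleC a (- x) = - scaleC a x"
  by (metis add.right_inverse minus_unique scaleC_add_right scaleC_zero_right)

lemma scaleC_minus_left: "scaleC (- a) x = - scaleC a x"
  by (metis add.right_inverse minus_unique scaleC_add_left scaleC_zero_left)

lemma scaleC_diff_right: "scaleC a (x - y) = scaleC a x - scaleC a y"
  by (metis scaleC_add_right scaleC_minus_right diff_conv_add_uminus)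

lemma scaleC_diff_left: "scaleC (a - b) x = scaleC a x - scaleC b x"
  by (metis scaleC_add_left scaleC_minus_left diff_conv_add_uminus)

lemma cinner_self: "cinner x x = complex_of_real ((norm x)\<^sup>2)"
  using norm_eq_sqrt_cinner[of x] cinner_self_nonneg[of x] cinner_self_real[of x]
  by (simp add: complex_eq_iff)

lemma norm_sq_eq_Re_cinner: "(norm x)\<^sup>2 = Re (cinner x x)"
  by (simp add: cinner_self)

lemma norm_scaleC: "norm (scaleC a x) = cmod a * norm x"
proof -
  have "complex_of_real ((norm (scaleC a x))\<^sup>2) = a * cnj a * complex_of_real ((norm x)\<^sup>2)"
    by (metis cinner_self cinner_scaleC_left cinner_scaleC_right mult.assoc mult.commute)
  also have "a * cnj a = complex_of_real ((cmod a)\<^sup>2)"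
    by (rule complex_norm_square[symmetric])
  finally have "(norm (scaleC a x))\<^sup>2 = (cmod a * norm x)\<^sup>2"
    by (metis of_real_eq_iff of_real_mult power_mult_distrib)
  then show ?thesis
    by (simp add: power2_eq_iff_nonneg)
qed

lemma parallelogram_law:
  fixes a b :: "'a::cinner_space"
  shows "(norm (a - b))\<^sup>2 + (norm (a + b))\<^sup>2 = 2 * (norm a)\<^sup>2 + 2 * (norm b)\<^sup>2"
  unfolding norm_sq_eq_Re_cinner
  by (simp add: cinner_add_left cinner_add_right cinner_diff_left cinner_diff_right)

lemma norm_diff_projection_sq:
  assumes "m \<noteq> 0"
  shows "(norm (z - scaleC (cinner z m / complex_of_real ((norm m)\<^sup>2)) m))\<^sup>2
           = (norm z)\<^sup>2 - (cmod (cinner z m))\<^sup>2 / (norm m)\<^sup>2"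
proof -
  define a where "a = cinner z m"
  define n where "n = (norm m)\<^sup>2"
  have n: "n > 0"
    using assms by (simp add: n_def)
  have "cinner (z - scaleC (a / n) m) (z - scaleC (a / n) m)
          = cinner z z - cnj (a / n) * a - (a / n) * cnj a + (a / n) * cnj (a / n) * cinner m m"
    unfolding cinner_diff_left cinner_diff_right cinner_scaleC_left cinner_scaleC_right a_def
    by (subst (2) cinner_commute) (simp add: algebra_simps)
  also have "\<dots> = complex_of_real ((norm z)\<^sup>2) - a * cnj a / n"
    using n by (simp add: cinner_self n_def field_simps power2_eq_square)
  also have "a * cnj a / n = complex_of_real ((cmod a)\<^sup>2 / n)"
    by (simp only: complex_norm_square[symmetric] of_real_divide)
  finally show ?thesis
    unfolding a_def n_def cinner_self by (metis of_real_diff of_real_eq_iff)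
qed

lemma cmod_cinner_le: "cmod (cinner x y) \<le> norm x * norm y"
proof (cases "y = 0")
  case False
  then have "(cmod (cinner x y))\<^sup>2 / (norm y)\<^sup>2 \<le> (norm x)\<^sup>2"
    using norm_diff_projection_sq[of y x] by (metis diff_ge_0_iff_ge zero_le_power2)
  then have "(cmod (cinner x y))\<^sup>2 \<le> (norm x * norm y)\<^sup>2"
    using False by (simp add: field_simps power_mult_distrib)
  then show ?thesis
    by (simp add: power2_le_iff_abs_le)
qed simp

lemma bounded_linear_cinner_right: "bounded_linear (\<lambda>y. cinner x y)"
proof
  show "cinner x (y + z) = cinner x y + cinner x z" for y z
    by (rule cinner_add_right)
  show "cinner x (scaleR r y) = scaleR r (cinner x y)" for r y
    by (simp only: scaleR_scaleC[of r y] cinner_scaleC_right complex_cnj_complex_of_real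
        scaleR_conv_of_real)
  show "\<exists>K. \<forall>y. norm (cinner x y) \<le> norm y * K"
    using cmod_cinner_le by (metis mult.commute norm_complex_def)
qed

lemma bounded_linear_cinner_left: "bounded_linear (\<lambda>x. cinner x y)"
proof
  show "cinner (x + z) y = cinner x y + cinner z y" for x z
    by (rule cinner_add_left)
  show "cinner (scaleR r x) y = scaleR r (cinner x y)" for r x
    by (simp only: scaleR_scaleC[of r x] cinner_scaleC_left scaleR_conv_of_real)
  show "\<exists>K. \<forall>x. norm (cinner x y) \<le> norm x * K"
    using cmod_cinner_le by (metis norm_complex_def)
qed

lemma bounded_linear_scaleC: "bounded_linear (\<lambda>x. scaleC c x)"
proof
  show "scaleC c (x + z) = scaleC c x + scaleC c z" for x z
    by (rule scaleC_add_right)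
  show "scaleC c (scaleR r x) = scaleR r (scaleC c x)" for r x
    by (simp add: scaleR_scaleC scaleC_scaleC mult.commute)
  show "\<exists>K. \<forall>x. norm (scaleC c x) \<le> norm x * K"
    by (metis norm_scaleC mult.commute order_refl)
qed

lemma continuous_on_cinner_right:
  "continuous_on S f \<Longrightarrow> continuous_on S (\<lambda>q. cinner x (f q))"
  by (rule bounded_linear.continuous_on[OF bounded_linear_cinner_right])

lemma continuous_on_cinner_left:
  "continuous_on S f \<Longrightarrow> continuous_on S (\<lambda>q. cinner (f q) y)"
  by (rule bounded_linear.continuous_on[OF bounded_linear_cinner_left])

lemma orthogonal_to_dense_eq_0:
  assumes "closure D = UNIV" and "\<And>d. d \<in> D \<Longrightarrow> cinner d x = 0"
  shows "x = 0"
proof -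
  have "closed {d. cinner d x = 0}"
    by (intro closed_Collect_eq continuous_on_cinner_left continuous_on_id continuous_on_const)
  then have "closure D \<subseteq> {d. cinner d x = 0}"
    using assms(2) by (intro closure_minimal) auto
  then show ?thesis
    using assms(1) cinner_self_eq_zero by auto
qed

section \<open>The projection theorem\<close>

definition csubspace :: "'a::cinner_space set \<Rightarrow> bool" where
  "csubspace M \<longleftrightarrow> 0 \<in> M \<and> (\<forall>x\<in>M. \<forall>y\<in>M. x + y \<in> M) \<and> (\<forall>c. \<forall>x\<in>M. scaleC c x \<in> M)"

lemma csubspace_midpoint:
  "csubspace M \<Longrightarrow> x \<in> M \<Longrightarrow> y \<in> M \<Longrightarrow> scaleR (1/2) (x + y) \<in> M"
  unfolding csubspace_def scaleR_scaleC by blast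

text \<open>The midpoint of two points of M lies in M, so by the parallelogram law two points
  of M at nearly minimal distance from x are close to each other.\<close>

lemma minimizing_sequence_Cauchy:
  assumes "csubspace M" and s: "\<And>n. s n \<in> M"
    and d_le: "\<And>m. m \<in> M \<Longrightarrow> d \<le> (norm (x - m))\<^sup>2"
    and s_near: "\<And>n. (norm (x - s n))\<^sup>2 < d + inverse (Suc n)"
  shows "Cauchy s"
proof (rule CauchyI)
  have close: "(norm (s m - s n))\<^sup>2 \<le> 2 * inverse (Suc m) + 2 * inverse (Suc n)" for m n
  proof -
    have "x - s m + (x - s n) = scaleR 2 (x - scaleR (1/2) (s m + s n))"
      by (simp add: algebra_simps scaleR_2)
    then have "4 * d \<le> (norm (x - s m + (x - s n)))\<^sup>2"
      using d_le[OF csubspace_midpoint[OF assms(1) s s]] by (simp add: power_mult_distrib)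
    moreover have "(norm (s n - s m))\<^sup>2 + (norm (x - s m + (x - s n)))\<^sup>2
        = 2 * (norm (x - s m))\<^sup>2 + 2 * (norm (x - s n))\<^sup>2"
      using parallelogram_law[of "x - s m" "x - s n"] by simp
    ultimately show ?thesis
      using s_near[of m] s_near[of n] by (simp add: norm_minus_commute)
  qed
  fix e :: real assume "e > 0"
  then obtain N where N: "inverse (Suc N) < e\<^sup>2 / 4"
    using reals_Archimedean[of "e\<^sup>2 / 4"] by auto
  have "norm (s m - s n) < e" if "N \<le> m" "N \<le> n" for m n
  proof -
    have "inverse (Suc m) \<le> inverse (Suc N)" "inverse (Suc n) \<le> inverse (Suc N)"
      using that by (simp_all add: field_simps)
    then have "(norm (s m - s n))\<^sup>2 < e\<^sup>2"
      using close[of m n] N by linarith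
    then show ?thesis
      using \<open>e > 0\<close> by (simp add: power2_less_imp_less)
  qed
  then show "\<exists>N. \<forall>m\<ge>N. \<forall>n\<ge>N. norm (s m - s n) < e"
    by blast
qed

lemma nearest_point_exists:
  fixes M :: "'a::{cinner_space, complete_space} set"
  assumes "closed M" and "csubspace M"
  obtains p where "p \<in> M" and "\<And>m. m \<in> M \<Longrightarrow> norm (x - p) \<le> norm (x - m)"
proof -
  let ?D = "(\<lambda>m. (norm (x - m))\<^sup>2) ` M"
  define d where "d = Inf ?D"
  have "?D \<noteq> {}"
    using assms(2) by (auto simp: csubspace_def)
  have d_le: "d \<le> (norm (x - m))\<^sup>2" if "m \<in> M" for m
    unfolding d_def using that by (intro cInf_lower bdd_belowI[of _ 0]) auto
  have "\<exists>m\<in>M. (norm (x - m))\<^sup>2 < d + inverse (Suc n)" for n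
    using cInf_lessD[OF \<open>?D \<noteq> {}\<close>, of "d + inverse (Suc n)"] by (auto simp: d_def)
  then obtain s where s: "\<And>n. s n \<in> M" "\<And>n. (norm (x - s n))\<^sup>2 < d + inverse (Suc n)"
    by metis
  then obtain p where p: "s \<longlonglongrightarrow> p"
    using minimizing_sequence_Cauchy[OF assms(2) s(1) d_le s(2)] Cauchy_convergent_iff
      convergent_def by blast
  have "(norm (x - p))\<^sup>2 \<le> d"
  proof (rule LIMSEQ_le)
    show "(\<lambda>n. (norm (x - s n))\<^sup>2) \<longlonglongrightarrow> (norm (x - p))\<^sup>2"
      by (intro tendsto_intros p)
    show "(\<lambda>n. d + inverse (Suc n)) \<longlonglongrightarrow> d"
      using tendsto_add[OF tendsto_const LIMSEQ_inverse_real_of_nat, of d] by simp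
    show "\<exists>N. \<forall>n\<ge>N. (norm (x - s n))\<^sup>2 \<le> d + inverse (Suc n)"
      using s(2) less_imp_le by blast
  qed
  then have "norm (x - p) \<le> norm (x - m)" if "m \<in> M" for m
    using d_le[OF that] by (simp add: power2_le_imp_le)
  moreover have "p \<in> M"
    using closed_sequentially[OF assms(1) s(1) p] .
  ultimately show thesis
    using that by blast
qed

lemma nearest_point_orthogonal:
  assumes "csubspace M" and "p \<in> M" and nearest: "\<And>m. m \<in> M \<Longrightarrow> norm (x - p) \<le> norm (x - m)"
    and "m \<in> M"
  shows "cinner (x - p) m = 0"
proof (cases "m = 0")
  case False
  define t where "t = cinner (x - p) m / complex_of_real ((norm m)\<^sup>2)"
  have "p + scaleC t m \<in> M"
    using assms(1,2,4) by (simp add: csubspace_def)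
  then have "norm (x - p) \<le> norm (x - p - scaleC t m)"
    using nearest by (simp add: diff_diff_eq)
  then have "(norm (x - p))\<^sup>2 \<le> (norm (x - p - scaleC t m))\<^sup>2"
    by (simp add: power_mono)
  then have "(cmod (cinner (x - p) m))\<^sup>2 / (norm m)\<^sup>2 \<le> 0"
    using norm_diff_projection_sq[OF False, of "x - p"] unfolding t_def by linarith
  then show ?thesis
    using False by (simp add: divide_le_0_iff)
qed simp

lemma closed_csubspace_eq_UNIV:
  fixes M :: "'a::{cinner_space, complete_space} set"
  assumes "closed M" and "csubspace M"
    and orth: "\<And>g. (\<And>m. m \<in> M \<Longrightarrow> cinner m g = 0) \<Longrightarrow> g = 0"
  shows "M = UNIV"
proof -
  have "x \<in> M" for x
  proof -
    obtain p where "p \<in> M" and "\<And>m. m \<in> M \<Longrightarrow> norm (x - p) \<le> norm (x - m)"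
      using nearest_point_exists[OF assms(1,2)] by blast
    then have "cinner m (x - p) = 0" if "m \<in> M" for m
      using nearest_point_orthogonal[OF assms(2)] that
      by (metis cinner_commute complex_cnj_zero)
    then show ?thesis
      using orth \<open>p \<in> M\<close> by force
  qed
  then show ?thesis
    by blast
qed

section \<open>Linear operators as graphs\<close>

lemma op_zero: "is_op A \<Longrightarrow> (0, 0) \<in> A"
  unfolding is_op_def by blast

lemma op_add: "is_op A \<Longrightarrow> (x, y) \<in> A \<Longrightarrow> (u, v) \<in> A \<Longrightarrow> (x + u, y + v) \<in> A"
  unfolding is_op_def by blast

lemma op_scaleC: "is_op A \<Longrightarrow> (x, y) \<in> A \<Longrightarrow> (scaleC c x, scaleC c y) \<in> A"
  unfolding is_op_def by blast

lemma op_zero_imp_zero: "is_op A \<Longrightarrow> (0, y) \<in> A \<Longrightarrow> y = 0"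
  unfolding is_op_def by blast

lemma op_diff: "is_op A \<Longrightarrow> (x, y) \<in> A \<Longrightarrow> (u, v) \<in> A \<Longrightarrow> (x - u, y - v) \<in> A"
  using op_add[of A x y "scaleC (-1) u" "scaleC (-1) v"] op_scaleC[of A u v "-1"]
  by (simp add: scaleC_minus_left)

lemma op_single_valued: "is_op A \<Longrightarrow> (x, y) \<in> A \<Longrightarrow> (x, y') \<in> A \<Longrightarrow> y = y'"
  using op_diff[of A x y x y'] op_zero_imp_zero[of A "y - y'"] by simp

lemma op_app_eq: "is_op A \<Longrightarrow> (x, y) \<in> A \<Longrightarrow> op_app A x = y"
  unfolding op_app_def by (blast intro: the_equality op_single_valued[symmetric])

lemma csubspace_Range: "is_op A \<Longrightarrow> csubspace (Range A)"
  unfolding csubspace_def by (blast intro: op_zero op_add op_scaleC)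

lemma clinear_on_Domain_zero:
  assumes "is_op A" and "clinear_on (Domain A) G"
  shows "G 0 = 0"
  using assms(2) op_zero[OF assms(1)] unfolding clinear_on_def
  by (metis Domain.DomainI scaleC_zero_left)

lemma clinear_on_Domain_diff:
  assumes "is_op A" and "clinear_on (Domain A) G" and "x \<in> Domain A" and "y \<in> Domain A"
  shows "G (x - y) = G x - G y"
proof -
  have "x - y \<in> Domain A"
    using op_diff[OF assms(1)] assms(3,4) by blast
  then have "G (x - y) + G y = G x"
    using assms(2,4) unfolding clinear_on_def by (metis diff_add_cancel)
  then show ?thesis
    by (simp add: eq_diff_eq)
qed

lemma is_op_restrict_kernel:
  assumes "is_op A" and "clinear_on (Domain A) H"
  shows "is_op {p \<in> A. H (fst p) = 0}"
proof -
  note H0 = clinear_on_Domain_zero[OF assms]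
  show ?thesis
    unfolding is_op_def
  proof (intro conjI allI impI)
    fix x y u v
    assume "(x, y) \<in> {p \<in> A. H (fst p) = 0}" "(u, v) \<in> {p \<in> A. H (fst p) = 0}"
    then have "(x, y) \<in> A" "(u, v) \<in> A" "H x = 0" "H u = 0"
      by auto
    moreover from this have "H (x + u) = H x + H u"
      using assms(2) unfolding clinear_on_def by blast
    ultimately show "(x + u, y + v) \<in> {p \<in> A. H (fst p) = 0}"
      using op_add[OF assms(1)] by simp
  next
    fix c x y
    assume "(x, y) \<in> {p \<in> A. H (fst p) = 0}"
    then have "(x, y) \<in> A" "H x = 0"
      by auto
    moreover from this have "H (scaleC c x) = scaleC c (H x)"
      using assms(2) unfolding clinear_on_def by blast
    ultimately show "(scaleC c x, scaleC c y) \<in> {p \<in> A. H (fst p) = 0}"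
      using op_scaleC[OF assms(1)] by simp
  qed (use assms(1) H0 op_zero op_zero_imp_zero in auto)
qed

lemma bounded_opI:
  assumes "is_op A" and B: "\<And>x y. (x, y) \<in> A \<Longrightarrow> norm x \<le> 1 \<Longrightarrow> norm y \<le> B"
  shows "bounded_op A"
  unfolding bounded_op_def
proof (intro exI allI impI)
  fix x y assume xy: "(x, y) \<in> A"
  show "norm y \<le> max B 0 * norm x"
  proof (cases "x = 0")
    case True
    then show ?thesis
      using op_zero_imp_zero[OF assms(1)] xy by simp
  next
    case False
    define s where "s = inverse (norm x)"
    have s: "s > 0" "s * norm x = 1"
      using False by (simp_all add: s_def)
    have "s * norm y \<le> B"
      using B[OF op_scaleC[OF assms(1) xy, of "complex_of_real s"]] s by (simp add: norm_scaleC)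
    then have "norm y \<le> B * norm x"
      using False by (simp add: s_def field_simps)
    then show ?thesis
      by (smt (verit) mult_right_mono norm_ge_zero)
  qed
qed

lemma bounded_opE:
  assumes "bounded_op A"
  obtains C where "C \<ge> 0" and "\<And>x y. (x, y) \<in> A \<Longrightarrow> norm y \<le> C * norm x"
proof -
  obtain C where C: "\<And>x y. (x, y) \<in> A \<Longrightarrow> norm y \<le> C * norm x"
    using assms unfolding bounded_op_def by blast
  have "norm y \<le> max C 0 * norm x" if "(x, y) \<in> A" for x y
    using C[OF that] mult_right_mono[of C "max C 0" "norm x"] by simp
  then show thesis
    using that[of "max C 0"] by simp
qed

lemma shift_op_iff: "(x, y) \<in> shift_op A l \<longleftrightarrow> (x, y + scaleC l x) \<in> A"
  unfolding shift_op_def by force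

lemma is_op_shift_op:
  assumes "is_op A"
  shows "is_op (shift_op A l)"
  unfolding is_op_def shift_op_iff
proof (intro conjI allI impI)
  show "(0, 0 + scaleC l 0) \<in> A"
    using op_zero[OF assms] by simp
  fix x y u v
  assume "(x, y + scaleC l x) \<in> A" "(u, v + scaleC l u) \<in> A"
  from op_add[OF assms this] show "(x + u, y + v + scaleC l (x + u)) \<in> A"
    by (simp add: scaleC_add_right add_ac)
next
  fix c x y
  assume "(x, y + scaleC l x) \<in> A"
  from op_scaleC[OF assms this, of c] show "(scaleC c x, scaleC c y + scaleC l (scaleC c x)) \<in> A"
    by (simp add: scaleC_add_right scaleC_scaleC mult.commute)
next
  fix y
  assume "(0, y + scaleC l 0) \<in> A"
  then show "y = 0"
    using op_zero_imp_zero[OF assms] by simp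
qed

lemma closed_shift_op:
  assumes "closed A"
  shows "closed (shift_op A l)"
proof -
  have "shift_op A l = (\<lambda>p. (fst p, snd p + scaleC l (fst p))) -` A"
    by (auto simp: shift_op_iff)
  moreover have "continuous_on UNIV (\<lambda>p. (fst p, snd p + scaleC l (fst p)))"
    by (intro continuous_on_Pair continuous_on_add continuous_on_fst continuous_on_snd
        continuous_on_id bounded_linear.continuous_on[OF bounded_linear_scaleC])
  ultimately show ?thesis
    using closed_vimage[OF assms] by simp
qed

lemma shift_op_change:
  "(x, y) \<in> shift_op A w \<Longrightarrow> (x, y + scaleC (w - z) x) \<in> shift_op A z"
  unfolding shift_op_iff by (simp add: scaleC_diff_left add.assoc)

section \<open>Resolvents\<close>

lemma resolvent_set_kernel:
  "l \<in> resolvent_set A \<Longrightarrow> (x, scaleC l x) \<in> A \<Longrightarrow> x = 0"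
  unfolding resolvent_set_def shift_op_iff by simp

lemma resolvent_eq:
  assumes "is_op A" and "l \<in> resolvent_set A" and "(x, y) \<in> shift_op A l"
  shows "resolvent A l y = x"
  unfolding resolvent_def
proof (rule the_equality)
  fix x' assume "(x', y) \<in> shift_op A l"
  from op_diff[OF is_op_shift_op[OF assms(1)] this assms(3)]
  have "(x' - x, 0) \<in> shift_op A l"
    by simp
  then show "x' = x"
    using assms(2) unfolding resolvent_set_def by auto
qed (rule assms(3))

lemma resolvent_in_shift_op:
  assumes "is_op A" and "l \<in> resolvent_set A"
  shows "(resolvent A l y, y) \<in> shift_op A l"
proof -
  have "Range (shift_op A l) = UNIV"
    using assms(2) by (simp add: resolvent_set_def)
  then obtain x where x: "(x, y) \<in> shift_op A l"
    by (metis RangeE UNIV_I)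
  with resolvent_eq[OF assms x] show ?thesis
    by simp
qed

lemma resolvent_in_graph:
  "is_op A \<Longrightarrow> l \<in> resolvent_set A \<Longrightarrow> (resolvent A l y, y + scaleC l (resolvent A l y)) \<in> A"
  using resolvent_in_shift_op shift_op_iff by blast

lemma resolvent_bound:
  assumes "is_op A" and "l \<in> resolvent_set A"
  obtains C where "C > 0" and "\<And>y. norm (resolvent A l y) \<le> C * norm y"
proof -
  obtain C where C: "\<forall>x y. (x, y) \<in> shift_op A l \<longrightarrow> norm x \<le> C * norm y"
    using assms(2) by (auto simp: resolvent_set_def)
  have "norm (resolvent A l y) \<le> max C 1 * norm y" for y
  proof -
    have "norm (resolvent A l y) \<le> C * norm y"
      using C resolvent_in_shift_op[OF assms] by blast
    also have "\<dots> \<le> max C 1 * norm y"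
      by (simp add: mult_right_mono)
    finally show ?thesis .
  qed
  then show thesis
    using that[of "max C 1"] by simp
qed

lemma resolvent_add:
  "is_op A \<Longrightarrow> l \<in> resolvent_set A \<Longrightarrow> resolvent A l (y + z) = resolvent A l y + resolvent A l z"
  by (rule resolvent_eq[OF _ _ op_add[OF is_op_shift_op resolvent_in_shift_op resolvent_in_shift_op]])

lemma resolvent_scaleC:
  "is_op A \<Longrightarrow> l \<in> resolvent_set A \<Longrightarrow> resolvent A l (scaleC c y) = scaleC c (resolvent A l y)"
  by (rule resolvent_eq[OF _ _ op_scaleC[OF is_op_shift_op resolvent_in_shift_op]])

lemma resolvent_diff:
  "is_op A \<Longrightarrow> l \<in> resolvent_set A \<Longrightarrow> resolvent A l (y - z) = resolvent A l y - resolvent A l z"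
  by (rule resolvent_eq[OF _ _ op_diff[OF is_op_shift_op resolvent_in_shift_op resolvent_in_shift_op]])

lemma resolvent_identity:
  assumes "is_op A" and "z \<in> resolvent_set A" and "w \<in> resolvent_set A"
  shows "resolvent A w v - resolvent A z v = scaleC (w - z) (resolvent A z (resolvent A w v))"
proof -
  have "resolvent A w v = resolvent A z (v + scaleC (w - z) (resolvent A w v))"
    using resolvent_eq[OF assms(1,2) shift_op_change[OF resolvent_in_shift_op[OF assms(1,3)]]]
    by simp
  also have "\<dots> = resolvent A z v + scaleC (w - z) (resolvent A z (resolvent A w v))"
    by (simp add: resolvent_add[OF assms(1,2)] resolvent_scaleC[OF assms(1,2)])
  finally show ?thesis
    by (simp add: algebra_simps)
qed

lemma shift_op_bounded_below_near:
  assumes A: "is_op A" and z: "z \<in> resolvent_set A" and "C > 0"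
    and C: "\<And>y. norm (resolvent A z y) \<le> C * norm y"
    and wz: "cmod (w - z) * C \<le> 1/2"
    and xy: "(x, y) \<in> shift_op A w"
  shows "norm x \<le> 2 * C * norm y"
proof -
  have "x = resolvent A z (y + scaleC (w - z) x)"
    using resolvent_eq[OF A z shift_op_change[OF xy]] by simp
  then have "norm x \<le> C * norm y + C * (cmod (w - z) * norm x)"
    using C[of "y + scaleC (w - z) x"] norm_triangle_ineq[of y "scaleC (w - z) x"] \<open>C > 0\<close>
    by (smt (verit) distrib_left mult_left_mono norm_scaleC)
  moreover have "C * (cmod (w - z) * norm x) \<le> 1/2 * norm x"
    using mult_right_mono[OF wz norm_ge_zero[of x]] by (simp add: algebra_simps)
  ultimately show ?thesis
    by simp
qed

text \<open>Near z, the equation (A - w) x = y is the fixed point equation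
  v = y + (w - z) R(z) v for v = (A - z) x, and the right-hand side is a contraction.\<close>

lemma Range_shift_op_near:
  fixes A :: "('a::{cinner_space, complete_space} \<times> 'a) set"
  assumes A: "is_op A" and z: "z \<in> resolvent_set A"
    and C: "\<And>y. norm (resolvent A z y) \<le> C * norm y"
    and wz: "cmod (w - z) * C \<le> 1/2"
  shows "y \<in> Range (shift_op A w)"
proof -
  define f where "f v = y + scaleC (w - z) (resolvent A z v)" for v
  have "dist (f v1) (f v2) \<le> 1/2 * dist v1 v2" for v1 v2
  proof -
    have "dist (f v1) (f v2) = cmod (w - z) * norm (resolvent A z (v1 - v2))"
      by (simp add: f_def dist_norm resolvent_diff[OF A z] scaleC_diff_right[symmetric] norm_scaleC)
    also have "\<dots> \<le> cmod (w - z) * (C * norm (v1 - v2))"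
      using C by (simp add: mult_left_mono)
    also have "\<dots> \<le> 1/2 * dist v1 v2"
      using mult_right_mono[OF wz norm_ge_zero[of "v1 - v2"]] by (simp add: dist_norm algebra_simps)
    finally show ?thesis .
  qed
  then obtain v where v: "f v = v"
    using banach_fix_type[of "1/2" f] by auto
  have "(resolvent A z v, v + scaleC (z - w) (resolvent A z v)) \<in> shift_op A w"
    by (rule shift_op_change[OF resolvent_in_shift_op[OF A z]])
  moreover have "v + scaleC (z - w) (resolvent A z v) = y"
    using v unfolding f_def
    by (metis add_diff_cancel_right' minus_diff_eq scaleC_minus_left diff_conv_add_uminus)
  ultimately show ?thesis
    by auto
qed

lemma resolvent_set_ball:
  fixes A :: "('a::{cinner_space, complete_space} \<times> 'a) set"
  assumes A: "is_op A" and z: "z \<in> resolvent_set A" and "C > 0"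
    and C: "\<And>y. norm (resolvent A z y) \<le> C * norm y"
    and wz: "cmod (w - z) * C \<le> 1/2"
  shows "w \<in> resolvent_set A" and "norm (resolvent A w y) \<le> 2 * C * norm y"
proof -
  note bound = shift_op_bounded_below_near[OF assms]
  show w: "w \<in> resolvent_set A"
    unfolding resolvent_set_def
  proof (intro CollectI conjI allI impI exI)
    show "x = 0" if "(x, 0) \<in> shift_op A w" for x
      using bound[OF that] by simp
    show "Range (shift_op A w) = UNIV"
      using Range_shift_op_near[OF A z C wz] by blast
    show "norm x \<le> 2 * C * norm y" if "(x, y) \<in> shift_op A w" for x y
      using bound[OF that] .
  qed
  show "norm (resolvent A w y) \<le> 2 * C * norm y"
    using bound resolvent_in_shift_op[OF A w] by blast
qed

lemma eventually_resolvent_bound: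
  fixes A :: "('a::{cinner_space, complete_space} \<times> 'a) set"
  assumes "is_op A" and "z \<in> resolvent_set A"
  obtains C where "C > 0"
    and "eventually (\<lambda>w. w \<in> resolvent_set A \<and> (\<forall>y. norm (resolvent A w y) \<le> C * norm y)) (nhds z)"
proof -
  obtain C where "C > 0" and C: "\<And>y. norm (resolvent A z y) \<le> C * norm y"
    using resolvent_bound[OF assms] by blast
  have "eventually (\<lambda>w. cmod (w - z) * C \<le> 1/2) (nhds z)"
    using eventually_nhds_metric[of _ z] \<open>C > 0\<close>
    by (auto intro!: exI[of _ "1 / (2 * C)"] simp: dist_norm field_simps)
  then have "eventually (\<lambda>w. w \<in> resolvent_set A \<and> (\<forall>y. norm (resolvent A w y) \<le> 2 * C * norm y)) (nhds z)"
    by (rule eventually_mono) (use resolvent_set_ball[OF assms \<open>C > 0\<close> C] in blast)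
  then show thesis
    using that[of "2 * C"] \<open>C > 0\<close> by simp
qed

lemma tendsto_resolvent:
  fixes A :: "('a::{cinner_space, complete_space} \<times> 'a) set"
  assumes A: "is_op A" and z: "z \<in> resolvent_set A"
  shows "((\<lambda>w. resolvent A w y) \<longlongrightarrow> resolvent A z y) (at z)"
proof -
  obtain C where "C > 0" and C: "\<And>y. norm (resolvent A z y) \<le> C * norm y"
    using resolvent_bound[OF assms] by blast
  obtain C' where
    "eventually (\<lambda>w. w \<in> resolvent_set A \<and> (\<forall>y. norm (resolvent A w y) \<le> C' * norm y)) (nhds z)"
    using eventually_resolvent_bound[OF assms] by blast
  then have near:
    "eventually (\<lambda>w. w \<in> resolvent_set A \<and> (\<forall>y. norm (resolvent A w y) \<le> C' * norm y)) (at z)"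
    by (simp add: eventually_nhds_conv_at)
  have "eventually (\<lambda>w. norm (resolvent A w y - resolvent A z y)
                       \<le> cmod (w - z) * (C * (C' * norm y))) (at z)"
    using near
  proof (rule eventually_mono, elim conjE)
    fix w assume w: "w \<in> resolvent_set A" and C': "\<forall>y. norm (resolvent A w y) \<le> C' * norm y"
    have "norm (resolvent A z (resolvent A w y)) \<le> C * (C' * norm y)"
      using C[of "resolvent A w y"] C' \<open>C > 0\<close> by (meson mult_left_mono less_imp_le order_trans)
    then show "norm (resolvent A w y - resolvent A z y) \<le> cmod (w - z) * (C * (C' * norm y))"
      by (simp add: resolvent_identity[OF A z w] norm_scaleC mult_left_mono)
  qed
  moreover have "((\<lambda>w. cmod (w - z)) \<longlongrightarrow> 0) (at z)"
    using tendsto_norm[OF tendsto_diff[OF tendsto_ident_at tendsto_const, of z z]] by simp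
  then have "((\<lambda>w. cmod (w - z) * (C * (C' * norm y))) \<longlongrightarrow> 0) (at z)"
    by (rule tendsto_mult_left_zero)
  ultimately have "((\<lambda>w. resolvent A w y - resolvent A z y) \<longlongrightarrow> 0) (at z)"
    by (rule Lim_null_comparison)
  then show ?thesis
    by (rule LIM_zero_cancel)
qed

section \<open>Adjoints\<close>

lemma adj_iff: "(y, w) \<in> adj A \<longleftrightarrow> (\<forall>x z. (x, z) \<in> A \<longrightarrow> cinner z y = cinner x w)"
  unfolding adj_def by auto

lemma closed_adj: "closed (adj A)"
proof -
  have "adj A = (\<Inter>p\<in>A. {q. cinner (snd p) (fst q) = cinner (fst p) (snd q)})"
    unfolding adj_def by (auto; metis fst_conv snd_conv)
  moreover have "closed (\<Inter>p\<in>A. {q. cinner (snd p) (fst q) = cinner (fst p) (snd q)})"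
    by (intro closed_INT ballI closed_Collect_eq continuous_on_cinner_right continuous_on_fst
        continuous_on_snd continuous_on_id)
  ultimately show ?thesis
    by simp
qed

lemma is_op_adj:
  assumes "closure (Domain A) = UNIV"
  shows "is_op (adj A)"
  unfolding is_op_def
proof (intro conjI allI impI)
  show "(0, 0) \<in> adj A"
    by (simp add: adj_iff)
  show "(y + u, w + v) \<in> adj A" if "(y, w) \<in> adj A" "(u, v) \<in> adj A" for y w u v
    using that by (simp add: adj_iff cinner_add_right)
  show "(scaleC c y, scaleC c w) \<in> adj A" if "(y, w) \<in> adj A" for c y w
    using that by (simp add: adj_iff cinner_scaleC_right)
  show "w = 0" if "(0, w) \<in> adj A" for w
    using that by (intro orthogonal_to_dense_eq_0[OF assms]) (force simp: adj_iff)
qed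

lemma adj_bound:
  assumes dense: "closure (Domain A) = UNIV" and "C \<ge> 0"
    and A: "\<And>x y. (x, y) \<in> A \<Longrightarrow> norm y \<le> C * norm x"
    and gw: "(g, w) \<in> adj A"
  shows "norm w \<le> C * norm g"
proof -
  define S where "S = {x. cmod (cinner x w) \<le> C * norm g * norm x}"
  have "closed S"
    unfolding S_def
    by (intro closed_Collect_le continuous_on_norm continuous_on_cinner_left continuous_intros)
  moreover have "Domain A \<subseteq> S"
  proof
    fix x assume "x \<in> Domain A"
    then obtain y where xy: "(x, y) \<in> A"
      by blast
    have "cmod (cinner x w) = cmod (cinner y g)"
      using gw xy by (simp add: adj_iff)
    also have "\<dots> \<le> norm y * norm g"
      by (rule cmod_cinner_le)
    also have "\<dots> \<le> C * norm x * norm g"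
      using A[OF xy] by (simp add: mult_right_mono)
    finally show "x \<in> S"
      by (simp add: S_def algebra_simps)
  qed
  ultimately have "w \<in> S"
    using dense closure_minimal by blast
  then have "norm w * norm w \<le> norm w * (C * norm g)"
    by (simp add: S_def cinner_self power2_eq_square norm_mult algebra_simps)
  then show ?thesis
    using \<open>C \<ge> 0\<close> by (cases "norm w = 0") (simp_all add: mult_le_cancel_left)
qed

lemma closed_Range_if_bounded_below:
  fixes A :: "('a::{cinner_space, complete_space} \<times> 'b::cinner_space) set"
  assumes "is_op A" and "closed A" and "C > 0"
    and below: "\<And>x y. (x, y) \<in> A \<Longrightarrow> norm x \<le> C * norm y"
  shows "closed (Range A)"
  unfolding closed_sequential_limits
proof (intro allI impI, elim conjE)
  fix s g assume s: "\<forall>n. s n \<in> Range A" and lim: "s \<longlonglongrightarrow> g"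
  then have "\<forall>n. \<exists>k. (k, s n) \<in> A"
    by blast
  then obtain k where k: "\<And>n. (k n, s n) \<in> A"
    by metis
  have "Cauchy k"
  proof (rule CauchyI)
    fix e :: real assume "e > 0"
    then obtain N where N: "\<forall>m\<ge>N. \<forall>n\<ge>N. norm (s m - s n) < e / C"
      using LIMSEQ_imp_Cauchy[OF lim] \<open>C > 0\<close> unfolding Cauchy_iff by (meson divide_pos_pos)
    have "norm (k m - k n) < e" if "N \<le> m" "N \<le> n" for m n
    proof -
      have "norm (k m - k n) \<le> C * norm (s m - s n)"
        by (rule below[OF op_diff[OF assms(1) k k]])
      also have "\<dots> < C * (e / C)"
        by (intro mult_strict_left_mono) (use N that \<open>C > 0\<close> in auto)
      finally show ?thesis
        using \<open>C > 0\<close> by simp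
    qed
    then show "\<exists>N. \<forall>m\<ge>N. \<forall>n\<ge>N. norm (k m - k n) < e"
      by blast
  qed
  then obtain x where "k \<longlonglongrightarrow> x"
    using Cauchy_convergent_iff convergent_def by blast
  then have "(x, g) \<in> A"
    using closed_sequentially[OF assms(2), of "\<lambda>n. (k n, s n)"] k lim by (simp add: tendsto_Pair)
  then show "g \<in> Range A"
    by blast
qed

lemma shift_op_adj_bounded_below:
  assumes A: "is_op A" and "adj A = B" and l: "l \<in> resolvent_set A" and "C \<ge> 0"
    and C: "\<And>y. norm (resolvent A l y) \<le> C * norm y"
    and kg: "(k, g) \<in> shift_op B (cnj l)"
  shows "norm k \<le> C * norm g"
proof -
  have "(resolvent A l k, k + scaleC l (resolvent A l k)) \<in> A"
    by (rule resolvent_in_graph[OF A l])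
  moreover have "(k, g + scaleC (cnj l) k) \<in> adj A"
    using kg \<open>adj A = B\<close> by (simp add: shift_op_iff)
  ultimately have "cinner (k + scaleC l (resolvent A l k)) k
                     = cinner (resolvent A l k) (g + scaleC (cnj l) k)"
    by (simp add: adj_iff)
  then have "cinner k k = cinner (resolvent A l k) g"
    by (simp add: cinner_add_left cinner_add_right cinner_scaleC_left cinner_scaleC_right)
  then have "(norm k)\<^sup>2 = cmod (cinner (resolvent A l k) g)"
    by (metis cinner_self norm_of_real abs_of_nonneg zero_le_power2)
  also have "\<dots> \<le> C * norm k * norm g"
    using cmod_cinner_le[of "resolvent A l k" g] C[of k] by (smt (verit) mult_right_mono norm_ge_zero)
  finally show ?thesis
    using \<open>C \<ge> 0\<close>
    by (cases "norm k = 0") (auto simp: power2_eq_square algebra_simps mult_le_cancel_left)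
qed

text \<open>B - cnj l is bounded below by duality with (A - l)^-1, so its range is closed; and
  the orthogonal complement of that range is ker (A - l) = 0.\<close>

lemma resolvent_set_adj:
  fixes A B :: "('a::{cinner_space, complete_space} \<times> 'a) set"
  assumes A: "is_op A" and B: "is_op B" and AB: "adj A = B" and BA: "adj B = A"
    and l: "l \<in> resolvent_set A"
  shows "cnj l \<in> resolvent_set B"
proof -
  obtain C where "C > 0" and C: "\<And>y. norm (resolvent A l y) \<le> C * norm y"
    using resolvent_bound[OF A l] by blast
  note below = shift_op_adj_bounded_below[OF A AB l less_imp_le[OF \<open>C > 0\<close>] C]
  have "closed (Range (shift_op B (cnj l)))"
    using closed_adj[of A] AB
    by (intro closed_Range_if_bounded_below[OF is_op_shift_op[OF B] closed_shift_op \<open>C > 0\<close> below])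
      simp_all
  moreover have "h = 0" if h: "\<And>g. g \<in> Range (shift_op B (cnj l)) \<Longrightarrow> cinner g h = 0" for h
  proof (rule resolvent_set_kernel[OF l])
    have "cinner (z - scaleC (cnj l) x) h = 0" if "(x, z) \<in> B" for x z
    proof -
      have "(x, z - scaleC (cnj l) x) \<in> shift_op B (cnj l)"
        using that by (simp add: shift_op_iff)
      then show ?thesis
        using h by blast
    qed
    then have "(h, scaleC l h) \<in> adj B"
      by (simp add: adj_iff cinner_diff_left cinner_scaleC_left cinner_scaleC_right)
    then show "(h, scaleC l h) \<in> A"
      using BA by simp
  qed
  ultimately have "Range (shift_op B (cnj l)) = UNIV"
    using closed_csubspace_eq_UNIV csubspace_Range[OF is_op_shift_op[OF B]] by blast
  then show ?thesis
    unfolding resolvent_set_def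
  proof (intro CollectI conjI allI impI exI)
    show "x = 0" if "(x, 0) \<in> shift_op B (cnj l)" for x
      using below[OF that] by simp
    show "norm x \<le> C * norm y" if "(x, y) \<in> shift_op B (cnj l)" for x y
      by (rule below[OF that])
  qed
qed

section \<open>Uniform boundedness\<close>

lemma norm_le_if_cinner_bounded_on_ball:
  assumes "r > 0" and bounded: "\<And>g. g \<in> ball y r \<Longrightarrow> cmod (cinner v g) \<le> K"
  shows "norm v \<le> 4 * K / r"
proof (cases "v = 0")
  case False
  define c where "c = r / (2 * norm v)"
  define h where "h = scaleC (complex_of_real c) v"
  have "c > 0" "c * norm v = r / 2"
    using False \<open>r > 0\<close> by (simp_all add: c_def)
  then have "norm h = r / 2"
    by (simp add: h_def norm_scaleC)
  then have "cmod (cinner v (y + h)) \<le> K" "cmod (cinner v y) \<le> K"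
    using bounded \<open>r > 0\<close> by (simp_all add: dist_norm)
  moreover have "cmod (cinner v h) = r / 2 * norm v"
    using \<open>c > 0\<close> \<open>c * norm v = r / 2\<close>
    by (simp add: h_def cinner_scaleC_right cinner_self power2_eq_square norm_mult)
  moreover have "cmod (cinner v h) \<le> cmod (cinner v (y + h)) + cmod (cinner v y)"
    using norm_triangle_ineq4[of "cinner v (y + h)" "cinner v y"] by (simp add: cinner_add_right)
  ultimately have "r / 2 * norm v \<le> 2 * K"
    by linarith
  then show ?thesis
    using \<open>r > 0\<close> by (simp add: field_simps)
next
  case True
  have "y \<in> ball y r"
    using \<open>r > 0\<close> by simp
  then have "0 \<le> K"
    using bounded norm_ge_zero order_trans by blast
  with True \<open>r > 0\<close> show ?thesis
    by simp
qed

text \<open>By Baire's theorem one of the closed sets E n = {g. \<forall>v\<in>V. |(v, g)| \<le> n}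
  contains a ball.\<close>

lemma weakly_bounded_imp_bounded:
  fixes V :: "'a::{cinner_space, complete_space} set"
  assumes weak: "\<And>g. \<exists>K. \<forall>v\<in>V. cmod (cinner v g) \<le> K"
  obtains B where "\<And>v. v \<in> V \<Longrightarrow> norm v \<le> B"
proof -
  define E where "E n = {g. \<forall>v\<in>V. cmod (cinner v g) \<le> real n}" for n :: nat
  have closed_E: "closed (E n)" for n
  proof -
    have "E n = (\<Inter>v\<in>V. {g. cmod (cinner v g) \<le> real n})"
      by (auto simp: E_def)
    moreover have "closed {g. cmod (cinner v g) \<le> real n}" for v :: 'a
      by (intro closed_Collect_le continuous_on_norm continuous_on_cinner_right continuous_on_id
          continuous_on_const)
    ultimately show ?thesis
      by auto
  qed
  have "\<exists>n. g \<in> E n" for g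
  proof -
    obtain K where "\<forall>v\<in>V. cmod (cinner v g) \<le> K"
      using weak by blast
    moreover obtain n :: nat where "K \<le> real n"
      using real_nat_ceiling_ge by blast
    ultimately have "g \<in> E n"
      unfolding E_def by (auto intro: order_trans)
    then show ?thesis ..
  qed
  then have "\<Union>(range E) = UNIV"
    by blast
  have "\<exists>n. interior (E n) \<noteq> {}"
  proof (rule ccontr)
    assume "\<nexists>n. interior (E n) \<noteq> {}"
    then have "closedin euclidean T \<and> euclidean interior_of T = {}" if "T \<in> range E" for T
      using that closed_E closed_closedin by auto
    then have "euclidean interior_of \<Union>(range E) = {}"
      using completely_metrizable_space_euclidean by (intro Baire_category_alt) auto
    with \<open>\<Union>(range E) = UNIV\<close> show False
      by simp
  qed
  then obtain n y where "y \<in> interior (E n)"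
    by blast
  then obtain r where "r > 0" and ball: "ball y r \<subseteq> E n"
    using open_contains_ball[of "interior (E n)"] interior_subset[of "E n"] by blast
  have "norm v \<le> 4 * real n / r" if "v \<in> V" for v
    using ball that by (intro norm_le_if_cinner_bounded_on_ball[OF \<open>r > 0\<close>]) (auto simp: E_def)
  then show thesis
    using that by blast
qed

section \<open>The \<gamma>-field of a boundary triple\<close>

text \<open>The hypotheses needed for the \<gamma>-field of one side; exchanging the two sides of the
  triple gives another instance, which yields the statements about the second \<gamma>-field.\<close>

locale boundary_triple_side =
  fixes T Tt :: "('h::{cinner_space, complete_space} \<times> 'h) set"
    and G0 G1 Gt0 Gt1 :: "'h \<Rightarrow> 'g::{cinner_space, complete_space}"
    and A0 At0 :: "('h \<times> 'h) set"
  assumes A0_def: "A0 = {p \<in> T. G0 (fst p) = 0}"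
    and At0_def: "At0 = {p \<in> Tt. Gt0 (fst p) = 0}"
    and is_op_T: "is_op T" and is_op_Tt: "is_op Tt"
    and clinear_G0: "clinear_on (Domain T) G0" and clinear_Gt0: "clinear_on (Domain Tt) Gt0"
    and green: "\<forall>f u g v. (f, u) \<in> T \<longrightarrow> (g, v) \<in> Tt \<longrightarrow>
                  cinner u g - cinner f v = cinner (G1 f) (Gt0 g) - cinner (G0 f) (Gt1 g)"
    and dense_G0: "closure (G0 ` Domain T) = UNIV"
    and adj_A0: "adj A0 = At0" and adj_At0: "adj At0 = A0"
begin

lemma is_op_A0: "is_op A0"
  unfolding A0_def by (rule is_op_restrict_kernel[OF is_op_T clinear_G0])

lemma is_op_At0: "is_op At0"
  unfolding At0_def by (rule is_op_restrict_kernel[OF is_op_Tt clinear_Gt0])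

lemma resolvent_set_At0: "l \<in> resolvent_set A0 \<Longrightarrow> cnj l \<in> resolvent_set At0"
  by (rule resolvent_set_adj[OF is_op_A0 is_op_At0 adj_A0 adj_At0])

lemma gamma_field_iff: "(\<phi>, f) \<in> gamma_field T G0 l \<longleftrightarrow> (f, scaleC l f) \<in> T \<and> \<phi> = G0 f"
  unfolding gamma_field_def op_ker_def shift_op_iff by auto

lemma Range_gamma_field: "Range (gamma_field T G0 l) = op_ker (shift_op T l)"
  unfolding gamma_field_def by auto

lemma is_op_gamma_field:
  assumes l: "l \<in> resolvent_set A0"
  shows "is_op (gamma_field T G0 l)"
proof -
  have "(0, 0) \<in> gamma_field T G0 l"
    using op_zero[OF is_op_T] clinear_on_Domain_zero[OF is_op_T clinear_G0]
    by (simp add: gamma_field_iff)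
  moreover have "(\<phi> + \<psi>, f + g) \<in> gamma_field T G0 l"
    if "(\<phi>, f) \<in> gamma_field T G0 l" "(\<psi>, g) \<in> gamma_field T G0 l" for \<phi> \<psi> f g
  proof -
    have "(f, scaleC l f) \<in> T" "(g, scaleC l g) \<in> T" "\<phi> = G0 f" "\<psi> = G0 g"
      using that by (simp_all add: gamma_field_iff)
    moreover from this have "G0 (f + g) = G0 f + G0 g"
      using clinear_G0 unfolding clinear_on_def by blast
    ultimately show ?thesis
      using op_add[OF is_op_T] by (simp add: gamma_field_iff scaleC_add_right)
  qed
  moreover have "(scaleC c \<phi>, scaleC c f) \<in> gamma_field T G0 l"
    if "(\<phi>, f) \<in> gamma_field T G0 l" for c \<phi> f
  proof -
    have "(f, scaleC l f) \<in> T" "\<phi> = G0 f"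
      using that by (simp_all add: gamma_field_iff)
    moreover from this have "G0 (scaleC c f) = scaleC c (G0 f)"
      using clinear_G0 unfolding clinear_on_def by blast
    ultimately show ?thesis
      using op_scaleC[OF is_op_T, of f "scaleC l f" c]
      by (simp add: gamma_field_iff scaleC_scaleC mult.commute)
  qed
  moreover have "f = 0" if "(0, f) \<in> gamma_field T G0 l" for f
    using that resolvent_set_kernel[OF l] by (simp add: gamma_field_iff A0_def)
  ultimately show ?thesis
    unfolding is_op_def by blast
qed

text \<open>The decomposition dom T = ker \<Gamma>0 + ker (T - l): the component of f in ker \<Gamma>0 is
  the resolvent of A0 applied to (T - l) f.\<close>

lemma G0_in_Domain_gamma_field:
  assumes l: "l \<in> resolvent_set A0" and fu: "(f, u) \<in> T"
  shows "(G0 f, f - resolvent A0 l (u - scaleC l f)) \<in> gamma_field T G0 l"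
proof -
  define h where "h = resolvent A0 l (u - scaleC l f)"
  have h: "(h, u - scaleC l f + scaleC l h) \<in> T" "G0 h = 0"
    using resolvent_in_graph[OF is_op_A0 l] by (auto simp: h_def A0_def)
  have "(f - h, u - (u - scaleC l f + scaleC l h)) \<in> T"
    by (rule op_diff[OF is_op_T fu h(1)])
  moreover have "u - (u - scaleC l f + scaleC l h) = scaleC l (f - h)"
    by (simp add: scaleC_diff_right)
  moreover have "G0 (f - h) = G0 f"
    using clinear_on_Domain_diff[OF is_op_T clinear_G0 Domain.DomainI[OF fu] Domain.DomainI[OF h(1)]]
      h(2) by simp
  ultimately show ?thesis
    unfolding gamma_field_iff h_def[symmetric] by simp
qed

lemma Domain_gamma_field:
  assumes "l \<in> resolvent_set A0"
  shows "Domain (gamma_field T G0 l) = G0 ` Domain T"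
proof
  show "Domain (gamma_field T G0 l) \<subseteq> G0 ` Domain T"
  proof
    fix \<phi> assume "\<phi> \<in> Domain (gamma_field T G0 l)"
    then obtain f where "(f, scaleC l f) \<in> T" and "\<phi> = G0 f"
      by (auto simp: gamma_field_iff)
    then show "\<phi> \<in> G0 ` Domain T"
      by (simp add: Domain.DomainI)
  qed
  show "G0 ` Domain T \<subseteq> Domain (gamma_field T G0 l)"
    using G0_in_Domain_gamma_field[OF assms] by blast
qed

lemma densely_defined_gamma_field:
  "l \<in> resolvent_set A0 \<Longrightarrow> densely_defined (gamma_field T G0 l)"
  unfolding densely_defined_def by (simp add: Domain_gamma_field dense_G0)

text \<open>Green's identity for f \<in> ker (T - l) and (At0 - cnj l)^-1 g \<in> ker \<Gamma>~0.\<close>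

lemma cinner_gamma_field:
  assumes l: "l \<in> resolvent_set A0" and "(\<phi>, f) \<in> gamma_field T G0 l"
  shows "cinner f g = cinner \<phi> (Gt1 (resolvent At0 (cnj l) g))"
proof -
  let ?k = "resolvent At0 (cnj l) g"
  have "(?k, g + scaleC (cnj l) ?k) \<in> Tt" and "Gt0 ?k = 0"
    using resolvent_in_graph[OF is_op_At0 resolvent_set_At0[OF l]] by (auto simp: At0_def)
  moreover have "(f, scaleC l f) \<in> T" and "\<phi> = G0 f"
    using assms(2) by (auto simp: gamma_field_iff)
  ultimately show ?thesis
    using green by (force simp: cinner_scaleC_left cinner_add_right cinner_scaleC_right)
qed

lemma bounded_op_gamma_field:
  assumes l: "l \<in> resolvent_set A0"
  shows "bounded_op (gamma_field T G0 l)"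
proof -
  let ?V = "{f. \<exists>\<phi>. (\<phi>, f) \<in> gamma_field T G0 l \<and> norm \<phi> \<le> 1}"
  have "cmod (cinner f g) \<le> norm (Gt1 (resolvent At0 (cnj l) g))"
    if "(\<phi>, f) \<in> gamma_field T G0 l" and "norm \<phi> \<le> 1" for \<phi> f g
  proof -
    have "cmod (cinner f g) = cmod (cinner \<phi> (Gt1 (resolvent At0 (cnj l) g)))"
      using cinner_gamma_field[OF l that(1)] by simp
    also have "\<dots> \<le> norm \<phi> * norm (Gt1 (resolvent At0 (cnj l) g))"
      by (rule cmod_cinner_le)
    also have "\<dots> \<le> norm (Gt1 (resolvent At0 (cnj l) g))"
      using that(2) by (simp add: mult_left_le_one_le)
    finally show ?thesis .
  qed
  then have "\<forall>f\<in>?V. cmod (cinner f g) \<le> norm (Gt1 (resolvent At0 (cnj l) g))" for g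
    by blast
  then obtain B where "\<And>f. f \<in> ?V \<Longrightarrow> norm f \<le> B"
    using weakly_bounded_imp_bounded[of ?V] by blast
  then show ?thesis
    by (intro bounded_opI[OF is_op_gamma_field[OF l]]) blast
qed

lemma gamma_field_resolvent_shift:
  assumes l: "l \<in> resolvent_set A0" and n: "n \<in> resolvent_set A0"
    and \<phi>f: "(\<phi>, f) \<in> gamma_field T G0 n"
  shows "(\<phi>, f + scaleC (l - n) (resolvent A0 l f)) \<in> gamma_field T G0 l"
proof -
  define r where "r = resolvent A0 l f"
  have f: "(f, scaleC n f) \<in> T" "\<phi> = G0 f"
    using \<phi>f by (auto simp: gamma_field_iff)
  have r: "(r, f + scaleC l r) \<in> T" "G0 r = 0"
    using resolvent_in_graph[OF is_op_A0 l] by (auto simp: r_def A0_def)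
  have "(f + scaleC (l - n) r, scaleC n f + scaleC (l - n) (f + scaleC l r)) \<in> T"
    by (rule op_add[OF is_op_T f(1) op_scaleC[OF is_op_T r(1)]])
  moreover have "scaleC n f + scaleC (l - n) (f + scaleC l r) = scaleC l (f + scaleC (l - n) r)"
    by (simp add: scaleC_add_right scaleC_add_left[symmetric] scaleC_scaleC algebra_simps)
  moreover have "G0 (f + scaleC (l - n) r) = G0 f + scaleC (l - n) (G0 r)"
    using clinear_G0 f(1) r(1) unfolding clinear_on_def
    by (metis Domain.DomainI op_scaleC[OF is_op_T r(1)])
  ultimately show ?thesis
    unfolding gamma_field_iff r_def[symmetric] using f(2) r(2) by simp
qed

lemma gamma_field_eq_resolvent_shift:
  assumes l: "l \<in> resolvent_set A0" and n: "n \<in> resolvent_set A0"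
  shows "gamma_field T G0 l =
           {(\<phi>, f + scaleC (l - n) (resolvent A0 l f)) | \<phi> f. (\<phi>, f) \<in> gamma_field T G0 n}"
    (is "_ = ?S")
proof
  show "?S \<subseteq> gamma_field T G0 l"
    using gamma_field_resolvent_shift[OF l n] by blast
  show "gamma_field T G0 l \<subseteq> ?S"
  proof
    fix p assume "p \<in> gamma_field T G0 l"
    then obtain \<phi> g where p: "p = (\<phi>, g)" and \<phi>g: "(\<phi>, g) \<in> gamma_field T G0 l"
      by (cases p) simp
    then have "\<phi> \<in> Domain (gamma_field T G0 n)"
      using Domain_gamma_field[OF l] Domain_gamma_field[OF n] by blast
    then obtain f where \<phi>f: "(\<phi>, f) \<in> gamma_field T G0 n"
      by blast
    have "g = f + scaleC (l - n) (resolvent A0 l f)"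
      by (rule op_single_valued[OF is_op_gamma_field[OF l] \<phi>g gamma_field_resolvent_shift[OF l n \<phi>f]])
    with \<phi>f show "p \<in> ?S"
      unfolding p by blast
  qed
qed

text \<open>By the resolvent formula the difference quotient of l \<mapsto> \<gamma>(l) \<phi> at z is
  (A0 - w)^-1 \<gamma>(z) \<phi>, which is continuous in w.\<close>

lemma vholomorphic_gamma_field:
  assumes "\<phi> \<in> G0 ` Domain T"
  shows "vholomorphic_on (\<lambda>l. op_app (gamma_field T G0 l) \<phi>) (resolvent_set A0)"
  unfolding vholomorphic_on_def
proof
  fix z assume z: "z \<in> resolvent_set A0"
  obtain f where \<phi>f: "(\<phi>, f) \<in> gamma_field T G0 z"
    using assms Domain_gamma_field[OF z] by blast
  have "eventually (\<lambda>w. w \<in> resolvent_set A0) (nhds z)"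
    using eventually_resolvent_bound[OF is_op_A0 z] by (metis (no_types, lifting) eventually_mono)
  then have "eventually (\<lambda>w. resolvent A0 w f
      = scaleC (inverse (w - z)) (op_app (gamma_field T G0 w) \<phi> - op_app (gamma_field T G0 z) \<phi>))
      (at z)"
    unfolding eventually_at_filter
  proof (rule eventually_mono, intro impI)
    fix w assume w: "w \<in> resolvent_set A0" and "w \<noteq> z"
    have "op_app (gamma_field T G0 w) \<phi> = f + scaleC (w - z) (resolvent A0 w f)"
      by (rule op_app_eq[OF is_op_gamma_field[OF w] gamma_field_resolvent_shift[OF w z \<phi>f]])
    moreover have "op_app (gamma_field T G0 z) \<phi> = f"
      by (rule op_app_eq[OF is_op_gamma_field[OF z] \<phi>f])
    ultimately show "resolvent A0 w f
      = scaleC (inverse (w - z)) (op_app (gamma_field T G0 w) \<phi> - op_app (gamma_field T G0 z) \<phi>)"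
      using \<open>w \<noteq> z\<close> by (simp add: scaleC_scaleC)
  qed
  then have "((\<lambda>w. scaleC (inverse (w - z))
      (op_app (gamma_field T G0 w) \<phi> - op_app (gamma_field T G0 z) \<phi>)) \<longlongrightarrow> resolvent A0 z f) (at z)"
    by (rule Lim_transform_eventually[OF tendsto_resolvent[OF is_op_A0 z]])
  then show "\<exists>v. ((\<lambda>w. scaleC (inverse (w - z))
      (op_app (gamma_field T G0 w) \<phi> - op_app (gamma_field T G0 z) \<phi>)) \<longlongrightarrow> v) (at z)"
    by blast
qed

lemma adj_gamma_field_pair:
  "l \<in> resolvent_set A0 \<Longrightarrow> (g, Gt1 (resolvent At0 (cnj l) g)) \<in> adj (gamma_field T G0 l)"
  unfolding adj_iff using cinner_gamma_field by blast

lemma is_op_adj_gamma_field: "l \<in> resolvent_set A0 \<Longrightarrow> is_op (adj (gamma_field T G0 l))"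
  by (rule is_op_adj[OF densely_defined_gamma_field[unfolded densely_defined_def]])

lemma Domain_adj_gamma_field: "l \<in> resolvent_set A0 \<Longrightarrow> Domain (adj (gamma_field T G0 l)) = UNIV"
  using adj_gamma_field_pair by blast

lemma op_app_adj_gamma_field:
  "l \<in> resolvent_set A0 \<Longrightarrow> op_app (adj (gamma_field T G0 l)) g = Gt1 (resolvent At0 (cnj l) g)"
  by (rule op_app_eq[OF is_op_adj_gamma_field adj_gamma_field_pair])

lemma adj_gamma_field_eq:
  "l \<in> resolvent_set A0 \<Longrightarrow> (g, w) \<in> adj (gamma_field T G0 l) \<Longrightarrow> w = Gt1 (resolvent At0 (cnj l) g)"
  by (rule op_single_valued[OF is_op_adj_gamma_field _ adj_gamma_field_pair])

lemma bounded_op_adj_gamma_field: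
  assumes l: "l \<in> resolvent_set A0"
  shows "bounded_op (adj (gamma_field T G0 l))"
proof -
  obtain C where "C \<ge> 0" and "\<And>\<phi> f. (\<phi>, f) \<in> gamma_field T G0 l \<Longrightarrow> norm f \<le> C * norm \<phi>"
    using bounded_opE[OF bounded_op_gamma_field[OF l]] by blast
  then show ?thesis
    unfolding bounded_op_def
    using adj_bound[OF densely_defined_gamma_field[OF l, unfolded densely_defined_def]] by blast
qed

lemma Range_adj_gamma_field:
  assumes l: "l \<in> resolvent_set A0"
  shows "Range (adj (gamma_field T G0 l)) \<subseteq> Gt1 ` Domain Tt"
proof
  fix w assume "w \<in> Range (adj (gamma_field T G0 l))"
  then obtain g where "w = Gt1 (resolvent At0 (cnj l) g)"
    using adj_gamma_field_eq[OF l] by blast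
  moreover have "resolvent At0 (cnj l) g \<in> Domain Tt"
    using resolvent_in_graph[OF is_op_At0 resolvent_set_At0[OF l], of g] by (auto simp: At0_def)
  ultimately show "w \<in> Gt1 ` Domain Tt"
    by blast
qed

end

lemma green_identity_swap:
  assumes "\<forall>f u g v. (f, u) \<in> T \<longrightarrow> (g, v) \<in> Tt \<longrightarrow>
             cinner u g - cinner f v = cinner (G1 f) (Gt0 g) - cinner (G0 f) (Gt1 g)"
  shows "\<forall>f u g v. (f, u) \<in> Tt \<longrightarrow> (g, v) \<in> T \<longrightarrow>
             cinner u g - cinner f v = cinner (Gt1 f) (G0 g) - cinner (Gt0 f) (G1 g)"
proof (intro allI impI)
  fix f u g v assume "(f, u) \<in> Tt" "(g, v) \<in> T"
  then have "cnj (cinner v f - cinner g u) = cnj (cinner (G1 g) (Gt0 f) - cinner (G0 g) (Gt1 f))"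
    using assms by simp
  then show "cinner u g - cinner f v = cinner (Gt1 f) (G0 g) - cinner (Gt0 f) (G1 g)"
    by (simp add: cinner_commute[of v] cinner_commute[of g] cinner_commute[of "G1 g"]
        cinner_commute[of "G0 g"]) (metis minus_diff_eq)
qed

theorem proposition3p3:
  fixes S St T Tt :: "('h::{cinner_space, complete_space} \<times> 'h) set"
    and G0 G1 Gt0 Gt1 :: "'h \<Rightarrow> 'g::{cinner_space, complete_space}"
  defines "A0 \<equiv> {p \<in> T. G0 (fst p) = 0}"
      and "At0 \<equiv> {p \<in> Tt. Gt0 (fst p) = 0}"
  assumes separable: "\<exists>D::'h set. countable D \<and> closure D = UNIV"
    and S_op: "is_op S" "closed_op S" "densely_defined S"
    and St_op: "is_op St" "closed_op St" "densely_defined St"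
    and adjoint_pair: "\<forall>f u g v. (f, u) \<in> S \<longrightarrow> (g, v) \<in> St \<longrightarrow> cinner u g = cinner f v"
    and T_core: "is_op T" "T \<subseteq> adj S" "closure T = adj S"
    and Tt_core: "is_op Tt" "Tt \<subseteq> adj St" "closure Tt = adj St"
    and lin: "clinear_on (Domain T) G0" "clinear_on (Domain T) G1"
             "clinear_on (Domain Tt) Gt0" "clinear_on (Domain Tt) Gt1"
    and G: "\<forall>f u g v. (f, u) \<in> T \<longrightarrow> (g, v) \<in> Tt \<longrightarrow>
              cinner u g - cinner f v = cinner (G1 f) (Gt0 g) - cinner (G0 f) (Gt1 g)"
    and D: "closure (G0 ` Domain T) = UNIV" "closure (Gt0 ` Domain Tt) = UNIV"
    and M: "adj A0 = At0" "adj At0 = A0"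
    and nonempty: "resolvent_set A0 \<noteq> {}"
  shows
   \<comment> \<open>(i)\<close>
   "(\<forall>l \<in> resolvent_set A0.
       is_op (gamma_field T G0 l) \<and> bounded_op (gamma_field T G0 l)
       \<and> Domain (gamma_field T G0 l) = G0 ` Domain T
       \<and> densely_defined (gamma_field T G0 l)
       \<and> Range (gamma_field T G0 l) = op_ker (shift_op T l))
  \<and> (\<forall>m \<in> resolvent_set At0.
       is_op (gamma_field Tt Gt0 m) \<and> bounded_op (gamma_field Tt Gt0 m)
       \<and> Domain (gamma_field Tt Gt0 m) = Gt0 ` Domain Tt
       \<and> densely_defined (gamma_field Tt Gt0 m)
       \<and> Range (gamma_field Tt Gt0 m) = op_ker (shift_op Tt m))
   \<comment> \<open>(ii)\<close>
  \<and> (\<forall>\<phi> \<in> G0 ` Domain T.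
       vholomorphic_on (\<lambda>l. op_app (gamma_field T G0 l) \<phi>) (resolvent_set A0))
  \<and> (\<forall>\<psi> \<in> Gt0 ` Domain Tt.
       vholomorphic_on (\<lambda>m. op_app (gamma_field Tt Gt0 m) \<psi>) (resolvent_set At0))
  \<and> (\<forall>l \<in> resolvent_set A0. \<forall>n \<in> resolvent_set A0.
       gamma_field T G0 l =
         {(\<phi>, x + scaleC (l - n) (resolvent A0 l x)) | \<phi> x. (\<phi>, x) \<in> gamma_field T G0 n})
  \<and> (\<forall>m \<in> resolvent_set At0. \<forall>w \<in> resolvent_set At0.
       gamma_field Tt Gt0 m =
         {(\<psi>, x + scaleC (m - w) (resolvent At0 m x)) | \<psi> x. (\<psi>, x) \<in> gamma_field Tt Gt0 w})
   \<comment> \<open>(iii)\<close>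
  \<and> (\<forall>l \<in> resolvent_set A0.
       is_op (adj (gamma_field T G0 l)) \<and> Domain (adj (gamma_field T G0 l)) = UNIV
       \<and> bounded_op (adj (gamma_field T G0 l))
       \<and> (\<forall>f. op_app (adj (gamma_field T G0 l)) f = Gt1 (resolvent At0 (cnj l) f))
       \<and> Range (adj (gamma_field T G0 l)) \<subseteq> Gt1 ` Domain Tt)
  \<and> (\<forall>m \<in> resolvent_set At0.
       is_op (adj (gamma_field Tt Gt0 m)) \<and> Domain (adj (gamma_field Tt Gt0 m)) = UNIV
       \<and> bounded_op (adj (gamma_field Tt Gt0 m))
       \<and> (\<forall>g. op_app (adj (gamma_field Tt Gt0 m)) g = G1 (resolvent A0 (cnj m) g))
       \<and> Range (adj (gamma_field Tt Gt0 m)) \<subseteq> G1 ` Domain T)"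
proof -
  interpret fwd: boundary_triple_side T Tt G0 G1 Gt0 Gt1 A0 At0
    using T_core(1) Tt_core(1) lin(1,3) G D(1) M
    by unfold_locales (simp_all add: A0_def At0_def)
  interpret bwd: boundary_triple_side Tt T Gt0 Gt1 G0 G1 At0 A0
    using T_core(1) Tt_core(1) lin(1,3) green_identity_swap[OF G] D(2) M
    by unfold_locales (simp_all add: A0_def At0_def)
  show ?thesis
    by (intro conjI ballI allI
        fwd.is_op_gamma_field fwd.bounded_op_gamma_field fwd.Domain_gamma_field
        fwd.densely_defined_gamma_field fwd.Range_gamma_field fwd.vholomorphic_gamma_field
        fwd.gamma_field_eq_resolvent_shift fwd.is_op_adj_gamma_field fwd.Domain_adj_gamma_field
        fwd.bounded_op_adj_gamma_field fwd.op_app_adj_gamma_field fwd.Range_adj_gamma_field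
        bwd.is_op_gamma_field bwd.bounded_op_gamma_field bwd.Domain_gamma_field
        bwd.densely_defined_gamma_field bwd.Range_gamma_field bwd.vholomorphic_gamma_field
        bwd.gamma_field_eq_resolvent_shift bwd.is_op_adj_gamma_field bwd.Domain_adj_gamma_field
        bwd.bounded_op_adj_gamma_field bwd.op_app_adj_gamma_field bwd.Range_adj_gamma_field)
qed

end
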